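(* For every open continuous surjection $f:X\to Y$ between compact Hausdorff spaces, the map $OS(f):OS(X)\to OS(Y)$ is open.
   Context: All spaces are compact Hausdorff and all maps continuous. For a compactum $X$, $C(X)$ is the Banach space of continuous real functions on $X$ with the sup-norm, $c_X$ the constant function with value $c$. Let $V(X)=\prod_{\varphi\in C(X)}[\min\varphi,\max\varphi]$ with the product topology. A functional $\nu:C(X)\to\mathbb{R}$ is: normed if $\nu(1_X)=1$; weakly additive if $\nu(\varphi+c_X)=\nu(\varphi)+c$; order-preserving if $\varphi\le\psi$ implies $\nu(\varphi)\le\nu(\psi)$; positively homogeneous if $\nu(t\varphi)=t\nu(\varphi)$ for $t\ge0$; semiadditive if $\nu(\varphi+\psi)\le\nu(\varphi)+\nu(\psi)$. $OS(X)\subset V(X)$ is the subspace of functionals satisfying all five properties. For $f:X\to Y$, $OS(f)(\nu)(\varphi)=\nu(\varphi\circ f)$ for $\varphi\in C(Y)$. *)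

theory Defs
  imports "HOL-Analysis.Analysis"
begin

definition CX :: "('a::topological_space \<Rightarrow> real) set" where
  "CX = {\<phi>. continuous_on UNIV \<phi>}"

text \<open>V(X) = product over C(X) of [min phi, max phi], product topology.
  Its elements are the extensional functions on C(X).\<close>
definition VX :: "(('a::topological_space \<Rightarrow> real) \<Rightarrow> real) topology" where
  "VX = product_topology (\<lambda>\<phi>. top_of_set {Inf (range \<phi>) .. Sup (range \<phi>)}) CX"

definition OSX :: "(('a::topological_space \<Rightarrow> real) \<Rightarrow> real) set" where
  "OSX = {\<nu> \<in> topspace VX.
      \<nu> (\<lambda>_. 1) = 1 \<and>
      (\<forall>\<phi>\<in>CX. \<forall>c::real. \<nu> (\<lambda>x. \<phi> x + c) = \<nu> \<phi> + c) \<and>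
      (\<forall>\<phi>\<in>CX. \<forall>\<psi>\<in>CX. (\<forall>x. \<phi> x \<le> \<psi> x) \<longrightarrow> \<nu> \<phi> \<le> \<nu> \<psi>) \<and>
      (\<forall>\<phi>\<in>CX. \<forall>t::real. t \<ge> 0 \<longrightarrow> \<nu> (\<lambda>x. t * \<phi> x) = t * \<nu> \<phi>) \<and>
      (\<forall>\<phi>\<in>CX. \<forall>\<psi>\<in>CX. \<nu> (\<lambda>x. \<phi> x + \<psi> x) \<le> \<nu> \<phi> + \<nu> \<psi>)}"

definition OS_top :: "(('a::topological_space \<Rightarrow> real) \<Rightarrow> real) topology" where
  "OS_top = subtopology VX OSX"

definition OS_map :: "('a::topological_space \<Rightarrow> 'b::topological_space)
    \<Rightarrow> (('a \<Rightarrow> real) \<Rightarrow> real) \<Rightarrow> (('b \<Rightarrow> real) \<Rightarrow> real)" where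
  "OS_map f \<nu> = (\<lambda>\<phi>\<in>CX. \<nu> (\<phi> \<circ> f))"

end

theory Submission
  imports Defs
begin

(*
  Let nu be in OS(X), mu = OS(f)(nu), and let a basic neighbourhood of nu be given by a
  finite set Phi of test functions and a radius.  We find a neighbourhood V of mu such that
  every l in V has a preimage nu' in OS(X) that is eta-close to nu on Phi.

  The preimage is an explicit inf-convolution.  Writing fmax phi y for the maximum of phi
  over the fibre f^-1(y) (continuous because f is open and closed) and
  lincomb Phi t = sum t_i phi_i for nonnegative weights t, put
     lift phi = inf_t  l (fmax (phi - lincomb Phi t)) + sum t_i (nu phi_i + eta).
  This functional is order-preserving, weakly additive, positively homogeneous and
  semiadditive, lifts l, and is within eta of nu on Phi, provided l satisfies two families
  of inequalities (upper and lower compatibility) indexed by the weights t.  After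
  normalising t, these families are indexed by a compact parameter set and depend
  equicontinuously on the parameter, so a single neighbourhood of mu enforces all of them.
*)

lemma CX_const [simp]: "(\<lambda>_. c) \<in> CX"
  by (simp add: CX_def)

lemma CX_add: "\<phi> \<in> CX \<Longrightarrow> \<psi> \<in> CX \<Longrightarrow> (\<lambda>x. \<phi> x + \<psi> x) \<in> CX"
  unfolding CX_def mem_Collect_eq by (intro continuous_on_add)

lemma CX_diff: "\<phi> \<in> CX \<Longrightarrow> \<psi> \<in> CX \<Longrightarrow> (\<lambda>x. \<phi> x - \<psi> x) \<in> CX"
  unfolding CX_def mem_Collect_eq by (intro continuous_on_diff)

lemma CX_minus: "\<phi> \<in> CX \<Longrightarrow> (\<lambda>x. - \<phi> x) \<in> CX"
  unfolding CX_def mem_Collect_eq by (intro continuous_on_minus)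

lemma CX_cmult: "\<phi> \<in> CX \<Longrightarrow> (\<lambda>x. c * \<phi> x) \<in> CX"
  unfolding CX_def mem_Collect_eq by (intro continuous_on_mult continuous_on_const)

lemma CX_addc: "\<phi> \<in> CX \<Longrightarrow> (\<lambda>x. \<phi> x + c) \<in> CX"
  unfolding CX_def mem_Collect_eq by (intro continuous_on_add continuous_on_const)

lemma CX_sum:
  "finite S \<Longrightarrow> (\<And>i. i \<in> S \<Longrightarrow> g i \<in> CX) \<Longrightarrow> (\<lambda>x. \<Sum>i\<in>S. c i * g i x) \<in> CX"
  unfolding CX_def mem_Collect_eq by (intro continuous_on_sum continuous_on_mult continuous_on_const) auto

lemma CX_comp: "\<psi> \<in> CX \<Longrightarrow> continuous_on UNIV f \<Longrightarrow> (\<lambda>x. \<psi> (f x)) \<in> CX"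
  unfolding CX_def mem_Collect_eq by (rule continuous_on_compose2[of UNIV \<psi> UNIV f]) auto

lemma CX_bounded:
  assumes "compact (UNIV :: 'a::topological_space set)" "\<phi> \<in> CX"
  shows "bounded (range (\<phi> :: 'a \<Rightarrow> real))"
  using assms unfolding CX_def mem_Collect_eq
  by (intro compact_imp_bounded compact_continuous_image)

lemma CX_uniform_bound:
  assumes "compact (UNIV :: 'a::topological_space set)" "finite \<Phi>" "\<Phi> \<subseteq> CX"
  obtains B :: real where "B > 0" "\<And>i x. i \<in> \<Phi> \<Longrightarrow> \<bar>i (x :: 'a)\<bar> \<le> B"
proof -
  have "bounded (\<Union>i\<in>\<Phi>. range i)" using assms CX_bounded by blast
  then obtain B where "B > 0" "\<forall>v\<in>(\<Union>i\<in>\<Phi>. range i). norm v \<le> B" unfolding bounded_pos by blast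
  then show ?thesis using that by auto
qed

context
  fixes \<nu> :: "('a::topological_space \<Rightarrow> real) \<Rightarrow> real"
  assumes nu: "\<nu> \<in> OSX"
begin

lemma os_norm: "\<nu> (\<lambda>_. 1) = 1"
  using nu by (simp add: OSX_def)

lemma os_addc: "\<phi> \<in> CX \<Longrightarrow> \<nu> (\<lambda>x. \<phi> x + c) = \<nu> \<phi> + c"
  using nu by (simp add: OSX_def)

lemma os_mono: "\<phi> \<in> CX \<Longrightarrow> \<psi> \<in> CX \<Longrightarrow> (\<And>x. \<phi> x \<le> \<psi> x) \<Longrightarrow> \<nu> \<phi> \<le> \<nu> \<psi>"
  using nu by (simp add: OSX_def)

lemma os_hom: "\<phi> \<in> CX \<Longrightarrow> t \<ge> 0 \<Longrightarrow> \<nu> (\<lambda>x. t * \<phi> x) = t * \<nu> \<phi>"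
  using nu by (simp add: OSX_def)

lemma os_sub: "\<phi> \<in> CX \<Longrightarrow> \<psi> \<in> CX \<Longrightarrow> \<nu> (\<lambda>x. \<phi> x + \<psi> x) \<le> \<nu> \<phi> + \<nu> \<psi>"
  using nu by (simp add: OSX_def)

lemma os_top: "\<nu> \<in> topspace VX"
  using nu by (simp add: OSX_def)

lemma os_const: "\<nu> (\<lambda>_. c) = c"
proof -
  have "\<nu> (\<lambda>_. 0) = 0" using os_hom[of "\<lambda>_. 1" 0] by simp
  then show ?thesis using os_addc[of "\<lambda>_. 0" c] by simp
qed

lemma os_lip:
  assumes "\<phi> \<in> CX" "\<psi> \<in> CX" "\<And>x. \<bar>\<phi> x - \<psi> x\<bar> \<le> e"
  shows "\<bar>\<nu> \<phi> - \<nu> \<psi>\<bar> \<le> e"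
proof -
  have le: "\<phi> x \<le> \<psi> x + e" "\<psi> x \<le> \<phi> x + e" for x
    using assms(3)[of x] by (simp_all add: abs_le_iff)
  have "\<nu> \<phi> \<le> \<nu> (\<lambda>x. \<psi> x + e)" "\<nu> \<psi> \<le> \<nu> (\<lambda>x. \<phi> x + e)"
    by (intro os_mono CX_addc assms(1,2) le)+
  then show ?thesis using assms(1,2) by (simp add: os_addc)
qed

lemma os_sum:
  "finite S \<Longrightarrow> (\<And>i. i \<in> S \<Longrightarrow> g i \<in> CX) \<Longrightarrow> (\<And>i. i \<in> S \<Longrightarrow> c i \<ge> 0) \<Longrightarrow>
   \<nu> (\<lambda>x. \<Sum>i\<in>S. c i * g i x) \<le> (\<Sum>i\<in>S. c i * \<nu> (g i))"
proof (induction S rule: finite_induct)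
  case empty
  then show ?case using os_const[of 0] by simp
next
  case (insert a S)
  have "\<nu> (\<lambda>x. \<Sum>i\<in>insert a S. c i * g i x) = \<nu> (\<lambda>x. c a * g a x + (\<Sum>i\<in>S. c i * g i x))"
    using insert by simp
  also have "\<dots> \<le> \<nu> (\<lambda>x. c a * g a x) + \<nu> (\<lambda>x. \<Sum>i\<in>S. c i * g i x)"
    using insert by (intro os_sub CX_cmult CX_sum) auto
  also have "\<dots> \<le> c a * \<nu> (g a) + (\<Sum>i\<in>S. c i * \<nu> (g i))"
    using insert by (simp add: os_hom)
  finally show ?case using insert by simp
qed

end

lemma eval_open:
  assumes "\<phi> \<in> CX" "open A"
  shows "openin VX {l \<in> topspace VX. l \<phi> \<in> A}"
proof -
  let ?I = "{Inf (range \<phi>) .. Sup (range \<phi>)}"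
  have "continuous_map VX (top_of_set ?I) (\<lambda>l. l \<phi>)"
    unfolding VX_def using continuous_map_product_projection[OF assms(1)] by simp
  moreover have "openin (top_of_set ?I) (?I \<inter> A)" using assms(2) by (simp add: openin_open_Int)
  ultimately have "openin VX {l \<in> topspace VX. l \<phi> \<in> ?I \<inter> A}"
    by (rule openin_continuous_map_preimage)
  moreover have "{l \<in> topspace VX. l \<phi> \<in> ?I \<inter> A} = {l \<in> topspace VX. l \<phi> \<in> A}"
    using assms(1) by (auto simp: VX_def PiE_iff)
  ultimately show ?thesis by simp
qed

lemma eval_open_finite:
  assumes "finite K" "\<And>k. k \<in> K \<Longrightarrow> F k \<in> CX" "\<And>k. k \<in> K \<Longrightarrow> open (A k)"
  shows "openin VX {l \<in> topspace VX. \<forall>k\<in>K. l (F k) \<in> A k}"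
  using assms
proof (induction K rule: finite_induct)
  case empty
  then show ?case by simp
next
  case (insert a K)
  have "{l \<in> topspace VX. \<forall>k\<in>insert a K. l (F k) \<in> A k} =
        {l \<in> topspace VX. l (F a) \<in> A a} \<inter> {l \<in> topspace VX. \<forall>k\<in>K. l (F k) \<in> A k}" by auto
  moreover have "openin VX {l \<in> topspace VX. l (F a) \<in> A a}"
    using insert.prems by (intro eval_open) auto
  moreover have "openin VX {l \<in> topspace VX. \<forall>k\<in>K. l (F k) \<in> A k}"
    using insert.prems by (intro insert.IH) auto
  ultimately show ?case by (simp add: openin_Int)
qed

lemma OS_basic_nbhd:
  assumes U: "openin OS_top U" and nuU: "\<nu> \<in> U"
  obtains \<Phi> \<epsilon> where "finite \<Phi>" "\<Phi> \<subseteq> CX" "\<epsilon> > 0"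
    "\<And>\<nu>'. \<nu>' \<in> OSX \<Longrightarrow> (\<forall>j\<in>\<Phi>. \<bar>\<nu>' j - \<nu> j\<bar> < \<epsilon>) \<Longrightarrow> \<nu>' \<in> U"
proof -
  obtain Uo where Uo: "openin VX Uo" "U = Uo \<inter> OSX"
    using U unfolding OS_top_def openin_subtopology by blast
  define I where "I = (\<lambda>\<phi> :: 'a \<Rightarrow> real. {Inf (range \<phi>) .. Sup (range \<phi>)})"
  have VX_I: "VX = product_topology (\<lambda>\<phi>. top_of_set (I \<phi>)) CX" unfolding VX_def I_def by simp
  obtain W where W: "finite {i \<in> CX. W i \<noteq> topspace (top_of_set (I i))}"
      "\<forall>i\<in>CX. openin (top_of_set (I i)) (W i)" "\<nu> \<in> PiE CX W" "PiE CX W \<subseteq> Uo"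
    using Uo nuU unfolding VX_I openin_product_topology_alt by blast
  define \<Phi> where "\<Phi> = {i \<in> CX. W i \<noteq> I i}"
  have Phi: "finite \<Phi>" "\<Phi> \<subseteq> CX" using W(1) unfolding \<Phi>_def by auto
  have "\<forall>i\<in>\<Phi>. \<exists>e>0. \<forall>y\<in>I i. dist y (\<nu> i) < e \<longrightarrow> y \<in> W i"
  proof
    fix i assume "i \<in> \<Phi>"
    then have "openin (top_of_set (I i)) (W i)" "\<nu> i \<in> W i" using W(2,3) Phi(2) by (auto simp: PiE_iff)
    then show "\<exists>e>0. \<forall>y\<in>I i. dist y (\<nu> i) < e \<longrightarrow> y \<in> W i"
      unfolding openin_euclidean_subtopology_iff by blast
  qed
  then obtain e where e: "\<And>i. i \<in> \<Phi> \<Longrightarrow> e i > 0 \<and> (\<forall>y\<in>I i. dist y (\<nu> i) < e i \<longrightarrow> y \<in> W i)"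
    by metis
  define \<epsilon> where "\<epsilon> = Min (insert 1 (e ` \<Phi>))"
  have eps: "\<epsilon> > 0" unfolding \<epsilon>_def using Phi e by (subst Min_gr_iff) auto
  have eps_le: "\<epsilon> \<le> e i" if "i \<in> \<Phi>" for i unfolding \<epsilon>_def using Phi that by (intro Min_le) auto
  have "\<nu>' \<in> U" if nu': "\<nu>' \<in> OSX" and close: "\<forall>j\<in>\<Phi>. \<bar>\<nu>' j - \<nu> j\<bar> < \<epsilon>" for \<nu>'
  proof -
    have range: "\<nu>' \<in> PiE CX I" using os_top[OF nu'] unfolding VX_def I_def by simp
    have "\<nu>' i \<in> W i" if i: "i \<in> CX" for i
    proof (cases "i \<in> \<Phi>")
      case True
      then have "dist (\<nu>' i) (\<nu> i) < e i" using close eps_le[OF True] by (force simp: dist_real_def)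
      then show ?thesis using e[OF True] range i by (auto simp: PiE_iff)
    next
      case False
      then show ?thesis using range i unfolding \<Phi>_def by (auto simp: PiE_iff)
    qed
    then have "\<nu>' \<in> PiE CX W" using range by (auto simp: PiE_iff)
    then show ?thesis using W(4) Uo(2) nu' by blast
  qed
  then show ?thesis using that Phi eps by blast
qed

(* Uniform closeness on a compact, equicontinuous family of test functions is an
   open condition on OS(X): the family is covered by finitely many small balls. *)
lemma uniformly_close_nbhd:
  fixes F :: "'p::topological_space \<Rightarrow> ('b::topological_space \<Rightarrow> real)"
  assumes K: "compact K" and FC: "\<And>k. k \<in> K \<Longrightarrow> F k \<in> CX"
    and equicont: "\<And>k e. k \<in> K \<Longrightarrow> e > 0 \<Longrightarrow>
          \<exists>W. open W \<and> k \<in> W \<and> (\<forall>k'\<in>W \<inter> K. \<forall>y. \<bar>F k y - F k' y\<bar> \<le> e)"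
    and mu: "\<mu> \<in> OSX" and d: "\<delta> > 0"
  shows "\<exists>V. openin OS_top V \<and> \<mu> \<in> V \<and> (\<forall>l\<in>V. \<forall>k\<in>K. \<bar>l (F k) - \<mu> (F k)\<bar> < \<delta>)"
proof -
  have "\<forall>k\<in>K. \<exists>W. open W \<and> k \<in> W \<and> (\<forall>k'\<in>W \<inter> K. \<forall>y. \<bar>F k y - F k' y\<bar> \<le> \<delta>/4)"
    using equicont[of _ "\<delta>/4"] d by simp
  then obtain W where W: "\<And>k. k \<in> K \<Longrightarrow>
      open (W k) \<and> k \<in> W k \<and> (\<forall>k'\<in>W k \<inter> K. \<forall>y. \<bar>F k y - F k' y\<bar> \<le> \<delta>/4)"
    by metis
  moreover have "K \<subseteq> (\<Union>k\<in>K. W k)" using W by blast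
  ultimately obtain K' where K': "K' \<subseteq> K" "finite K'" "K \<subseteq> (\<Union>k\<in>K'. W k)"
    using compactE_image[OF K, of K W] by metis
  define V where "V = OSX \<inter> {l \<in> topspace VX. \<forall>k\<in>K'. l (F k) \<in> ball (\<mu> (F k)) (\<delta>/4)}"
  have "openin OS_top V"
    unfolding V_def OS_top_def openin_subtopology
    using eval_open_finite[OF K'(2), of F "\<lambda>k. ball (\<mu> (F k)) (\<delta>/4)"] FC K'(1) by blast
  moreover have "\<mu> \<in> V" unfolding V_def using mu d os_top[OF mu] by auto
  moreover have "\<bar>l (F k) - \<mu> (F k)\<bar> < \<delta>" if l: "l \<in> V" and k: "k \<in> K" for l k
  proof -
    obtain k' where k': "k' \<in> K'" "k \<in> W k'" using K' k by blast
    have close: "\<forall>y. \<bar>F k' y - F k y\<bar> \<le> \<delta>/4" using W[of k'] k' K' k by auto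
    have lO: "l \<in> OSX" and lk: "\<bar>l (F k') - \<mu> (F k')\<bar> < \<delta>/4"
      using l k' unfolding V_def by (auto simp: dist_real_def abs_minus_commute)
    have "\<bar>l (F k') - l (F k)\<bar> \<le> \<delta>/4" using close FC k K' k' by (intro os_lip[OF lO]) auto
    moreover have "\<bar>\<mu> (F k') - \<mu> (F k)\<bar> \<le> \<delta>/4" using close FC k K' k' by (intro os_lip[OF mu]) auto
    ultimately show ?thesis using lk by linarith
  qed
  ultimately show ?thesis by blast
qed

lemma OS_map_apply: "\<psi> \<in> CX \<Longrightarrow> OS_map f \<nu> \<psi> = \<nu> (\<lambda>x. \<psi> (f x))"
  by (simp add: OS_map_def o_def)

lemma OS_map_OSX:
  assumes contf: "continuous_on UNIV f" and surjf: "surj f" and nu: "\<nu> \<in> OSX"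
  shows "OS_map f \<nu> \<in> OSX"
proof -
  let ?\<mu> = "OS_map f \<nu>"
  have comp: "(\<lambda>x. \<psi> (f x)) \<in> CX" if "\<psi> \<in> CX" for \<psi> using that contf by (rule CX_comp)
  have "\<nu> (\<lambda>x. \<psi> (f x)) \<in> {Inf (range \<psi>) .. Sup (range \<psi>)}" if psi: "\<psi> \<in> CX" for \<psi>
  proof -
    have "range (\<lambda>x. \<psi> (f x)) = range \<psi>" using surjf by (simp add: image_image[symmetric])
    then show ?thesis using os_top[OF nu] comp[OF psi] unfolding VX_def by (auto simp: PiE_iff)
  qed
  then have "?\<mu> \<in> topspace VX" unfolding VX_def OS_map_def by (simp add: restrict_PiE_iff o_def)
  moreover have "?\<mu> (\<lambda>_. 1) = 1" by (simp add: OS_map_apply os_norm[OF nu])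
  moreover have "\<forall>\<phi>\<in>CX. \<forall>c::real. ?\<mu> (\<lambda>x. \<phi> x + c) = ?\<mu> \<phi> + c"
    by (simp add: OS_map_apply CX_addc comp os_addc[OF nu])
  moreover have "\<forall>\<phi>\<in>CX. \<forall>\<psi>\<in>CX. (\<forall>x. \<phi> x \<le> \<psi> x) \<longrightarrow> ?\<mu> \<phi> \<le> ?\<mu> \<psi>"
    by (simp add: OS_map_apply comp os_mono[OF nu])
  moreover have "\<forall>\<phi>\<in>CX. \<forall>t::real. t \<ge> 0 \<longrightarrow> ?\<mu> (\<lambda>x. t * \<phi> x) = t * ?\<mu> \<phi>"
    by (simp add: OS_map_apply CX_cmult comp os_hom[OF nu])
  moreover have "\<forall>\<phi>\<in>CX. \<forall>\<psi>\<in>CX. ?\<mu> (\<lambda>x. \<phi> x + \<psi> x) \<le> ?\<mu> \<phi> + ?\<mu> \<psi>"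
    by (simp add: OS_map_apply CX_add comp os_sub[OF nu])
  ultimately show ?thesis unfolding OSX_def by blast
qed

locale open_surjection =
  fixes f :: "'a::t2_space \<Rightarrow> 'b::t2_space"
  assumes compact_dom: "compact (UNIV :: 'a set)"
    and contf: "continuous_on UNIV f"
    and openf: "\<And>U. open U \<Longrightarrow> open (f ` U)"
    and surjf: "surj f"
begin

definition fmax :: "('a \<Rightarrow> real) \<Rightarrow> 'b \<Rightarrow> real" where
  "fmax \<phi> y = Sup (\<phi> ` (f -` {y}))"

lemma fmax_attained:
  assumes "\<phi> \<in> CX"
  shows "\<exists>x. f x = y \<and> fmax \<phi> y = \<phi> x"
proof -
  have "closed (f -` {y})"
    using continuous_on_closed_vimage[OF closed_UNIV] contf closed_singleton by fastforce
  then have "compact (f -` {y})" using compact_Int_closed[OF compact_dom] by simp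
  moreover have "f -` {y} \<noteq> {}" using surjf by (metis surjE vimage_singleton_eq empty_iff)
  moreover have "continuous_on (f -` {y}) \<phi>"
    using assms unfolding CX_def mem_Collect_eq by (rule continuous_on_subset) simp
  ultimately obtain x where x: "x \<in> f -` {y}" "\<forall>z\<in>f -` {y}. \<phi> z \<le> \<phi> x"
    using continuous_attains_sup by blast
  then have "Sup (\<phi> ` (f -` {y})) = \<phi> x" by (intro cSup_eq_maximum) auto
  then show ?thesis using x unfolding fmax_def by auto
qed

lemma fmax_ge:
  assumes phi: "\<phi> \<in> CX"
  shows "\<phi> x \<le> fmax \<phi> (f x)"
proof -
  have "bdd_above (\<phi> ` (f -` {f x}))"
    using CX_bounded[OF compact_dom phi] by (meson bdd_above_mono bounded_imp_bdd_above image_mono top_greatest)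
  then show ?thesis unfolding fmax_def by (rule cSup_upper[rotated]) simp
qed

lemma fmax_least:
  assumes "\<phi> \<in> CX" "\<And>x. \<phi> x \<le> g (f x)"
  shows "fmax \<phi> y \<le> g y"
proof -
  obtain x where "f x = y" "fmax \<phi> y = \<phi> x" using fmax_attained[OF assms(1)] by blast
  then show ?thesis using assms(2)[of x] by simp
qed

lemma fmax_less_set:
  assumes phi: "\<phi> \<in> CX"
  shows "{y. fmax \<phi> y < c} = - f ` {x. c \<le> \<phi> x}"
proof (intro set_eqI iffI)
  fix y assume lt: "y \<in> {y. fmax \<phi> y < c}"
  show "y \<in> - f ` {x. c \<le> \<phi> x}"
  proof
    assume "y \<in> f ` {x. c \<le> \<phi> x}"
    then obtain x where "y = f x" "c \<le> \<phi> x" by blast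
    then show False using fmax_ge[OF phi, of x] lt by simp
  qed
next
  fix y assume "y \<in> - f ` {x. c \<le> \<phi> x}"
  moreover obtain x where "f x = y" "fmax \<phi> y = \<phi> x" using fmax_attained[OF phi] by blast
  ultimately show "y \<in> {y. fmax \<phi> y < c}" by (auto simp: not_le)
qed

lemma fmax_greater_set:
  assumes phi: "\<phi> \<in> CX"
  shows "{y. c < fmax \<phi> y} = f ` {x. c < \<phi> x}"
proof (intro set_eqI iffI)
  fix y assume "y \<in> {y. c < fmax \<phi> y}"
  moreover obtain x where "f x = y" "fmax \<phi> y = \<phi> x" using fmax_attained[OF phi] by blast
  ultimately show "y \<in> f ` {x. c < \<phi> x}" by auto
next
  fix y assume "y \<in> f ` {x. c < \<phi> x}"
  then obtain x where "y = f x" "c < \<phi> x" by blast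
  then show "y \<in> {y. c < fmax \<phi> y}" using fmax_ge[OF phi, of x] by simp
qed

(* Continuity of the fibre maximum: this is where the openness of f is used. *)
lemma fmax_CX:
  assumes phi: "\<phi> \<in> CX"
  shows "fmax \<phi> \<in> CX"
proof -
  have cphi: "continuous_on UNIV \<phi>" using phi by (simp add: CX_def)
  have "open {y. fmax \<phi> y < c}" for c
  proof -
    have "closed {x. c \<le> \<phi> x}" using cphi by (simp add: closed_Collect_le continuous_on_const)
    then have "compact {x. c \<le> \<phi> x}" using compact_Int_closed[OF compact_dom] by simp
    then have "compact (f ` {x. c \<le> \<phi> x})"
      using contf by (metis compact_continuous_image continuous_on_subset top_greatest)
    then show ?thesis unfolding fmax_less_set[OF phi] by (simp add: compact_imp_closed open_Compl)
  qed
  moreover have "open {y. c < fmax \<phi> y}" for c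
    unfolding fmax_greater_set[OF phi]
    using cphi by (intro openf) (simp add: open_Collect_less continuous_on_const)
  ultimately have "isCont (fmax \<phi>) y" for y
    unfolding isCont_def order_tendsto_iff
    by (metis (mono_tags, lifting) eventually_at_topological mem_Collect_eq)
  then show ?thesis unfolding CX_def by (simp add: continuous_at_imp_continuous_on)
qed

lemma fmax_comp_add:
  assumes "\<psi> \<in> CX" "\<phi> \<in> CX"
  shows "fmax (\<lambda>x. \<psi> (f x) + \<phi> x) y = \<psi> y + fmax \<phi> y"
proof -
  have c: "(\<lambda>x. \<psi> (f x) + \<phi> x) \<in> CX" by (rule CX_add[OF CX_comp[OF assms(1) contf] assms(2)])
  obtain x where "f x = y" "fmax \<phi> y = \<phi> x" using fmax_attained[OF assms(2)] by blast
  then have "\<psi> y + fmax \<phi> y \<le> fmax (\<lambda>x. \<psi> (f x) + \<phi> x) y" using fmax_ge[OF c, of x] by simp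
  moreover have "fmax (\<lambda>x. \<psi> (f x) + \<phi> x) y \<le> \<psi> y + fmax \<phi> y"
    using fmax_ge[OF assms(2)] by (intro fmax_least[OF c]) (simp add: add_mono)
  ultimately show ?thesis by simp
qed

lemma fmax_const: "fmax (\<lambda>_. c) y = c"
  using fmax_attained[of "\<lambda>_. c" y] by simp

lemma fmax_comp:
  assumes "\<psi> \<in> CX"
  shows "fmax (\<lambda>x. \<psi> (f x)) = \<psi>"
proof
  fix y
  show "fmax (\<lambda>x. \<psi> (f x)) y = \<psi> y"
    using fmax_comp_add[OF assms CX_const[of 0], of y] fmax_const[of 0 y] by simp
qed

lemma fmax_mono:
  assumes "\<phi> \<in> CX" "\<psi> \<in> CX" "\<And>x. \<phi> x \<le> \<psi> x"
  shows "fmax \<phi> y \<le> fmax \<psi> y"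
  using fmax_ge[OF assms(2)] assms(3) by (intro fmax_least[OF assms(1)]) (meson order_trans)

lemma fmax_addc: "\<phi> \<in> CX \<Longrightarrow> fmax (\<lambda>x. \<phi> x + c) y = fmax \<phi> y + c"
  using fmax_comp_add[OF CX_const[of c], of \<phi> y] by (simp add: add.commute)

lemma fmax_hom:
  assumes "\<phi> \<in> CX" "c \<ge> 0"
  shows "fmax (\<lambda>x. c * \<phi> x) y = c * fmax \<phi> y"
proof -
  have c: "(\<lambda>x. c * \<phi> x) \<in> CX" using assms CX_cmult by blast
  obtain x where "f x = y" "fmax \<phi> y = \<phi> x" using fmax_attained[OF assms(1)] by blast
  then have "c * fmax \<phi> y \<le> fmax (\<lambda>x. c * \<phi> x) y" using fmax_ge[OF c, of x] by simp
  moreover have "fmax (\<lambda>x. c * \<phi> x) y \<le> c * fmax \<phi> y"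
    using fmax_ge[OF assms(1)] assms(2) by (intro fmax_least[OF c]) (simp add: mult_left_mono)
  ultimately show ?thesis by simp
qed

lemma fmax_sub:
  assumes "\<phi> \<in> CX" "\<psi> \<in> CX"
  shows "fmax (\<lambda>x. \<phi> x + \<psi> x) y \<le> fmax \<phi> y + fmax \<psi> y"
  using fmax_ge[OF assms(1)] fmax_ge[OF assms(2)]
  by (intro fmax_least[OF CX_add[OF assms]]) (simp add: add_mono)

lemma fmax_lip:
  assumes "\<phi> \<in> CX" "\<psi> \<in> CX" "\<And>x. \<bar>\<phi> x - \<psi> x\<bar> \<le> e"
  shows "\<bar>fmax \<phi> y - fmax \<psi> y\<bar> \<le> e"
proof -
  have le: "\<phi> x \<le> \<psi> x + e" "\<psi> x \<le> \<phi> x + e" for x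
    using assms(3)[of x] by (simp_all add: abs_le_iff)
  have "fmax \<phi> y \<le> fmax (\<lambda>x. \<psi> x + e) y" "fmax \<psi> y \<le> fmax (\<lambda>x. \<phi> x + e) y"
    by (intro fmax_mono CX_addc assms(1,2) le)+
  then show ?thesis using assms(1,2) by (simp add: fmax_addc)
qed

end

definition lincomb :: "('a \<Rightarrow> real) set \<Rightarrow> (('a \<Rightarrow> real) \<Rightarrow> real) \<Rightarrow> 'a \<Rightarrow> real" where
  "lincomb \<Phi> t x = (\<Sum>i\<in>\<Phi>. t i * i x)"

definition weights :: "('a \<Rightarrow> real) set \<Rightarrow> (('a \<Rightarrow> real) \<Rightarrow> real) set" where
  "weights \<Phi> = {t. \<forall>i\<in>\<Phi>. 0 \<le> t i}"

lemma lincomb_CX: "finite \<Phi> \<Longrightarrow> \<Phi> \<subseteq> CX \<Longrightarrow> lincomb \<Phi> t \<in> CX"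
  unfolding lincomb_def[abs_def] by (rule CX_sum) auto

lemma lincomb_scale: "lincomb \<Phi> (\<lambda>i. c * t i) x = c * lincomb \<Phi> t x"
  by (simp add: lincomb_def sum_distrib_left mult.assoc)

lemma lincomb_add: "lincomb \<Phi> (\<lambda>i. t i + t' i) x = lincomb \<Phi> t x + lincomb \<Phi> t' x"
  by (simp add: lincomb_def sum.distrib distrib_right)

lemma sum_unit_weight:
  assumes "finite \<Phi>" "j \<in> \<Phi>"
  shows "(\<Sum>i\<in>\<Phi>. (if i = j then 1 else 0) * g i) = (g j :: real)"
proof -
  have "(\<Sum>i\<in>\<Phi>. (if i = j then 1 else 0) * g i) = (\<Sum>i\<in>\<Phi>. if i = j then g j else 0)"
    by (rule sum.cong) auto
  also have "\<dots> = g j" using sum.delta[OF assms(1), of j "\<lambda>_. g j"] assms(2) by simp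
  finally show ?thesis .
qed

lemma sum_weighted_shift:
  "(\<Sum>i\<in>\<Phi>. t i * (g i + c)) = (\<Sum>i\<in>\<Phi>. t i * g i) + (\<Sum>i\<in>\<Phi>. t i) * (c :: real)"
  by (simp add: distrib_left sum.distrib sum_distrib_right)

locale OS_lift = open_surjection f for f :: "'a::t2_space \<Rightarrow> 'b::t2_space" +
  fixes l :: "('b \<Rightarrow> real) \<Rightarrow> real" and \<Phi> :: "('a \<Rightarrow> real) set" and a :: "('a \<Rightarrow> real) \<Rightarrow> real"
  assumes l_OS: "l \<in> OSX" and Phi_finite: "finite \<Phi>" and Phi_CX: "\<Phi> \<subseteq> CX"
    and upper_compatible:
      "\<And>t. t \<in> weights \<Phi> \<Longrightarrow> l (\<lambda>y. - fmax (\<lambda>x. - lincomb \<Phi> t x) y) \<le> (\<Sum>i\<in>\<Phi>. t i * a i)"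
begin

definition lift_term :: "('a \<Rightarrow> real) \<Rightarrow> (('a \<Rightarrow> real) \<Rightarrow> real) \<Rightarrow> real" where
  "lift_term \<phi> t = l (fmax (\<lambda>x. \<phi> x - lincomb \<Phi> t x)) + (\<Sum>i\<in>\<Phi>. t i * a i)"

definition lift :: "('a \<Rightarrow> real) \<Rightarrow> real" where
  "lift \<phi> = Inf (lift_term \<phi> ` weights \<Phi>)"

lemma lincomb_Phi_CX: "lincomb \<Phi> t \<in> CX"
  using Phi_finite Phi_CX by (rule lincomb_CX)

lemma residual_CX: "\<phi> \<in> CX \<Longrightarrow> (\<lambda>x. \<phi> x - lincomb \<Phi> t x) \<in> CX"
  by (rule CX_diff[OF _ lincomb_Phi_CX])

lemma lift_term_mono:
  assumes "\<phi> \<in> CX" "\<phi>' \<in> CX" "\<And>x. \<phi> x \<le> \<phi>' x"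
  shows "lift_term \<phi> t \<le> lift_term \<phi>' t"
proof -
  have "fmax (\<lambda>x. \<phi> x - lincomb \<Phi> t x) y \<le> fmax (\<lambda>x. \<phi>' x - lincomb \<Phi> t x) y" for y
    using assms by (intro fmax_mono residual_CX) auto
  then have "l (fmax (\<lambda>x. \<phi> x - lincomb \<Phi> t x)) \<le> l (fmax (\<lambda>x. \<phi>' x - lincomb \<Phi> t x))"
    using assms by (intro os_mono[OF l_OS] fmax_CX residual_CX)
  then show ?thesis unfolding lift_term_def by simp
qed

lemma lift_term_comp_ge:
  assumes psi: "\<psi> \<in> CX" and t: "t \<in> weights \<Phi>"
  shows "l \<psi> \<le> lift_term (\<lambda>x. \<psi> (f x)) t"
proof -
  define h where "h = fmax (\<lambda>x. - lincomb \<Phi> t x)"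
  have hC: "h \<in> CX" unfolding h_def by (intro fmax_CX CX_minus lincomb_Phi_CX)
  have shift: "fmax (\<lambda>x. \<psi> (f x) - lincomb \<Phi> t x) = (\<lambda>y. \<psi> y + h y)"
    using fmax_comp_add[OF psi CX_minus[OF lincomb_Phi_CX]] unfolding h_def by auto
  have "l (\<lambda>y. (\<psi> y + h y) + - h y) \<le> l (\<lambda>y. \<psi> y + h y) + l (\<lambda>y. - h y)"
    by (rule os_sub[OF l_OS CX_add[OF psi hC] CX_minus[OF hC]])
  moreover have "l (\<lambda>y. - h y) \<le> (\<Sum>i\<in>\<Phi>. t i * a i)" unfolding h_def using upper_compatible[OF t] .
  ultimately show ?thesis unfolding lift_term_def shift by simp
qed

lemma lift_term_bdd_below:
  assumes phi: "\<phi> \<in> CX"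
  shows "bdd_below (lift_term \<phi> ` weights \<Phi>)"
proof -
  obtain B where B: "\<And>x. \<bar>\<phi> x\<bar> \<le> B"
    using CX_bounded[OF compact_dom phi] unfolding bounded_iff by auto
  have "- B \<le> lift_term \<phi> t" if t: "t \<in> weights \<Phi>" for t
  proof -
    have "- B = l (\<lambda>_. - B)" using os_const[OF l_OS] by simp
    also have "\<dots> \<le> lift_term (\<lambda>x. - B) t" using lift_term_comp_ge[OF CX_const t] by simp
    also have "\<dots> \<le> lift_term \<phi> t"
    proof (rule lift_term_mono[OF CX_const phi])
      fix x show "- B \<le> \<phi> x" using B[of x] by (simp add: abs_le_iff)
    qed
    finally show ?thesis .
  qed
  then show ?thesis unfolding bdd_below_def by blast
qed

(* lift is the infimum of its terms; it is finite because terms are bounded below. *)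
lemma lift_le: "\<phi> \<in> CX \<Longrightarrow> t \<in> weights \<Phi> \<Longrightarrow> lift \<phi> \<le> lift_term \<phi> t"
  unfolding lift_def by (rule cInf_lower) (auto intro: lift_term_bdd_below)

lemma lift_ge: "(\<And>t. t \<in> weights \<Phi> \<Longrightarrow> c \<le> lift_term \<phi> t) \<Longrightarrow> c \<le> lift \<phi>"
  unfolding lift_def by (rule cInf_greatest) (auto simp: weights_def)

(* The lift lies over l; the zero weight attains the infimum on pull-backs. *)
lemma lift_comp:
  assumes psi: "\<psi> \<in> CX"
  shows "lift (\<lambda>x. \<psi> (f x)) = l \<psi>"
proof (rule antisym)
  have "lift_term (\<lambda>x. \<psi> (f x)) (\<lambda>_. 0) = l \<psi>"
    unfolding lift_term_def lincomb_def using fmax_comp[OF psi] by simp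
  then show "lift (\<lambda>x. \<psi> (f x)) \<le> l \<psi>"
    using lift_le[OF CX_comp[OF psi contf], of "\<lambda>_. 0"] by (simp add: weights_def)
  show "l \<psi> \<le> lift (\<lambda>x. \<psi> (f x))" by (rule lift_ge) (rule lift_term_comp_ge[OF psi])
qed

lemma lift_const: "lift (\<lambda>_. c) = c"
  using lift_comp[OF CX_const[of c]] os_const[OF l_OS] by simp

lemma lift_mono:
  assumes "\<phi> \<in> CX" "\<phi>' \<in> CX" "\<And>x. \<phi> x \<le> \<phi>' x"
  shows "lift \<phi> \<le> lift \<phi>'"
proof (rule lift_ge)
  fix t assume t: "t \<in> weights \<Phi>"
  show "lift \<phi> \<le> lift_term \<phi>' t"
    using lift_le[OF assms(1) t] lift_term_mono[OF assms, of t] by linarith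
qed

(* The defining properties of OS transfer from terms to lift: translating phi shifts
   every term, scaling phi and the weight scales the term, and adding functions and
   weights bounds the term of the sum by the sum of the terms. *)
lemma lift_term_addc: "\<phi> \<in> CX \<Longrightarrow> lift_term (\<lambda>x. \<phi> x + c) t = lift_term \<phi> t + c"
proof -
  assume phi: "\<phi> \<in> CX"
  have "fmax (\<lambda>x. \<phi> x + c - lincomb \<Phi> t x) y = fmax (\<lambda>x. \<phi> x - lincomb \<Phi> t x) y + c" for y
    using fmax_addc[OF residual_CX[OF phi], where c=c] by (simp add: algebra_simps)
  then have "fmax (\<lambda>x. \<phi> x + c - lincomb \<Phi> t x) = (\<lambda>y. fmax (\<lambda>x. \<phi> x - lincomb \<Phi> t x) y + c)"
    by (rule ext)
  then show ?thesis
    unfolding lift_term_def using os_addc[OF l_OS fmax_CX[OF residual_CX[OF phi]]] by simp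
qed

lemma lift_addc:
  assumes phi: "\<phi> \<in> CX"
  shows "lift (\<lambda>x. \<phi> x + c) = lift \<phi> + c"
proof (rule antisym)
  have "lift (\<lambda>x. \<phi> x + c) - c \<le> lift \<phi>"
  proof (rule lift_ge)
    fix t assume t: "t \<in> weights \<Phi>"
    show "lift (\<lambda>x. \<phi> x + c) - c \<le> lift_term \<phi> t"
      using lift_le[OF CX_addc[OF phi, of c] t] lift_term_addc[OF phi] by simp
  qed
  then show "lift (\<lambda>x. \<phi> x + c) \<le> lift \<phi> + c" by simp
  show "lift \<phi> + c \<le> lift (\<lambda>x. \<phi> x + c)"
    by (rule lift_ge) (simp add: lift_term_addc[OF phi] lift_le[OF phi])
qed

lemma lift_term_hom:
  assumes phi: "\<phi> \<in> CX" and c: "c \<ge> 0"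
  shows "lift_term (\<lambda>x. c * \<phi> x) (\<lambda>i. c * t i) = c * lift_term \<phi> t"
proof -
  have "fmax (\<lambda>x. c * \<phi> x - lincomb \<Phi> (\<lambda>i. c * t i) x) y = c * fmax (\<lambda>x. \<phi> x - lincomb \<Phi> t x) y"
    for y using fmax_hom[OF residual_CX[OF phi] c] by (simp add: lincomb_scale right_diff_distrib)
  then have "fmax (\<lambda>x. c * \<phi> x - lincomb \<Phi> (\<lambda>i. c * t i) x) = (\<lambda>y. c * fmax (\<lambda>x. \<phi> x - lincomb \<Phi> t x) y)"
    by (rule ext)
  moreover have "(\<Sum>i\<in>\<Phi>. c * t i * a i) = c * (\<Sum>i\<in>\<Phi>. t i * a i)"
    by (simp add: sum_distrib_left mult.assoc)
  ultimately show ?thesis unfolding lift_term_def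
    using os_hom[OF l_OS fmax_CX[OF residual_CX[OF phi]] c] by (simp add: distrib_left)
qed

lemma lift_hom:
  assumes phi: "\<phi> \<in> CX" and c: "c \<ge> 0"
  shows "lift (\<lambda>x. c * \<phi> x) = c * lift \<phi>"
proof (cases "c = 0")
  case True
  then show ?thesis using lift_const[of 0] by simp
next
  case False
  with c have cp: "c > 0" by simp
  have scale: "(\<lambda>i. r * t i) \<in> weights \<Phi>" if "t \<in> weights \<Phi>" "r \<ge> 0" for t r
    using that by (simp add: weights_def)
  have "lift (\<lambda>x. c * \<phi> x) \<le> c * lift_term \<phi> t" if t: "t \<in> weights \<Phi>" for t
    using lift_le[OF CX_cmult[OF phi, of c] scale[OF t c]] lift_term_hom[OF phi c] by simp
  then have "lift (\<lambda>x. c * \<phi> x) / c \<le> lift \<phi>"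
    using cp by (intro lift_ge) (simp add: divide_le_eq mult.commute)
  moreover have "c * lift \<phi> \<le> lift_term (\<lambda>x. c * \<phi> x) t" if t: "t \<in> weights \<Phi>" for t
  proof -
    have "lift \<phi> \<le> lift_term \<phi> (\<lambda>i. (1/c) * t i)" using lift_le[OF phi scale[OF t, of "1/c"]] cp by simp
    then show ?thesis using lift_term_hom[OF phi c, of "\<lambda>i. (1/c) * t i"] cp by simp
  qed
  then have "c * lift \<phi> \<le> lift (\<lambda>x. c * \<phi> x)" by (rule lift_ge)
  ultimately show ?thesis using cp by (simp add: divide_le_eq mult.commute)
qed

lemma lift_term_sub:
  assumes phi: "\<phi> \<in> CX" and psi: "\<psi> \<in> CX"
  shows "lift_term (\<lambda>x. \<phi> x + \<psi> x) (\<lambda>i. t i + t' i) \<le> lift_term \<phi> t + lift_term \<psi> t'"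
proof -
  let ?A = "fmax (\<lambda>x. \<phi> x - lincomb \<Phi> t x)" and ?B = "fmax (\<lambda>x. \<psi> x - lincomb \<Phi> t' x)"
  have AC: "?A \<in> CX" and BC: "?B \<in> CX" by (intro fmax_CX residual_CX phi psi)+
  have split: "(\<lambda>x. \<phi> x + \<psi> x - lincomb \<Phi> (\<lambda>i. t i + t' i) x)
             = (\<lambda>x. (\<phi> x - lincomb \<Phi> t x) + (\<psi> x - lincomb \<Phi> t' x))"
    by (simp add: lincomb_add algebra_simps)
  have "l (fmax (\<lambda>x. \<phi> x + \<psi> x - lincomb \<Phi> (\<lambda>i. t i + t' i) x)) \<le> l (\<lambda>y. ?A y + ?B y)"
    unfolding split using fmax_sub[OF residual_CX[OF phi] residual_CX[OF psi]]
    by (intro os_mono[OF l_OS] fmax_CX CX_add AC BC residual_CX phi psi)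
  also have "\<dots> \<le> l ?A + l ?B" by (rule os_sub[OF l_OS AC BC])
  finally show ?thesis unfolding lift_term_def by (simp add: sum.distrib distrib_right)
qed

lemma lift_sub:
  assumes phi: "\<phi> \<in> CX" and psi: "\<psi> \<in> CX"
  shows "lift (\<lambda>x. \<phi> x + \<psi> x) \<le> lift \<phi> + lift \<psi>"
proof -
  have sum_w: "(\<lambda>i. t i + t' i) \<in> weights \<Phi>" if "t \<in> weights \<Phi>" "t' \<in> weights \<Phi>" for t t'
    using that by (simp add: weights_def)
  have "lift (\<lambda>x. \<phi> x + \<psi> x) - lift \<phi> \<le> lift \<psi>"
  proof (rule lift_ge)
    fix t' assume t': "t' \<in> weights \<Phi>"
    have "lift (\<lambda>x. \<phi> x + \<psi> x) - lift_term \<psi> t' \<le> lift \<phi>"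
    proof (rule lift_ge)
      fix t assume t: "t \<in> weights \<Phi>"
      show "lift (\<lambda>x. \<phi> x + \<psi> x) - lift_term \<psi> t' \<le> lift_term \<phi> t"
        using lift_le[OF CX_add[OF phi psi] sum_w[OF t t']] lift_term_sub[OF phi psi, of t t'] by simp
    qed
    then show "lift (\<lambda>x. \<phi> x + \<psi> x) - lift \<phi> \<le> lift_term \<psi> t'" by simp
  qed
  then show ?thesis by simp
qed

(* The unit weight at j makes the residual vanish, so the lift is at most a j. *)
lemma lift_upper: "j \<in> \<Phi> \<Longrightarrow> lift j \<le> a j"
proof -
  assume j: "j \<in> \<Phi>"
  let ?e = "\<lambda>i. if i = j then 1 else (0::real)"
  have "(\<lambda>x. j x - lincomb \<Phi> ?e x) = (\<lambda>_. 0)"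
    unfolding lincomb_def using sum_unit_weight[OF Phi_finite j] by simp
  moreover have "fmax (\<lambda>_. 0) = (\<lambda>_. 0)" by (rule ext) (rule fmax_const)
  ultimately have "lift_term j ?e = a j"
    unfolding lift_term_def using os_const[OF l_OS, of 0] sum_unit_weight[OF Phi_finite j, of a] by simp
  then show ?thesis using lift_le[of j ?e] j Phi_CX by (auto simp: weights_def)
qed

(* The lift is an OS-functional; its values lie in [min phi, max phi] by monotonicity
   and normalisation. *)
lemma lift_OSX: "restrict lift CX \<in> OSX"
proof -
  have "lift \<phi> \<in> {Inf (range \<phi>) .. Sup (range \<phi>)}" if phi: "\<phi> \<in> CX" for \<phi>
  proof -
    have bd: "bounded (range \<phi>)" by (rule CX_bounded[OF compact_dom phi])
    have "lift (\<lambda>_. Inf (range \<phi>)) \<le> lift \<phi>"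
      by (rule lift_mono[OF CX_const phi]) (simp add: cInf_lower bd bounded_imp_bdd_below)
    moreover have "lift \<phi> \<le> lift (\<lambda>_. Sup (range \<phi>))"
      by (rule lift_mono[OF phi CX_const]) (simp add: cSup_upper bd bounded_imp_bdd_above)
    ultimately show ?thesis using lift_const by simp
  qed
  then have "restrict lift CX \<in> topspace VX" unfolding VX_def by (simp add: restrict_PiE_iff)
  moreover have "\<forall>\<phi>\<in>CX. \<forall>c::real. restrict lift CX (\<lambda>x. \<phi> x + c) = restrict lift CX \<phi> + c"
    by (simp add: CX_addc lift_addc)
  moreover have "\<forall>\<phi>\<in>CX. \<forall>\<psi>\<in>CX. (\<forall>x. \<phi> x \<le> \<psi> x) \<longrightarrow> restrict lift CX \<phi> \<le> restrict lift CX \<psi>"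
    by (simp add: lift_mono)
  moreover have "\<forall>\<phi>\<in>CX. \<forall>t::real. t \<ge> 0 \<longrightarrow> restrict lift CX (\<lambda>x. t * \<phi> x) = t * restrict lift CX \<phi>"
    by (simp add: CX_cmult lift_hom)
  moreover have "\<forall>\<phi>\<in>CX. \<forall>\<psi>\<in>CX. restrict lift CX (\<lambda>x. \<phi> x + \<psi> x) \<le> restrict lift CX \<phi> + restrict lift CX \<psi>"
    by (simp add: CX_add lift_sub)
  ultimately show ?thesis unfolding OSX_def by (simp add: lift_const)
qed

(* Both sides are extensional on C(Y); on C(Y) this is lift_comp. *)
lemma lift_OS_map: "OS_map f (restrict lift CX) = l"
proof
  fix \<psi>
  show "OS_map f (restrict lift CX) \<psi> = l \<psi>"
  proof (cases "\<psi> \<in> CX")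
    case True
    then show ?thesis using lift_comp CX_comp[OF True contf] by (simp add: OS_map_apply)
  next
    case False
    have "l \<in> extensional CX" using os_top[OF l_OS] unfolding VX_def by (simp add: PiE_iff)
    then show ?thesis unfolding OS_map_def using False by (simp add: extensional_def)
  qed
qed

end

lemma (in open_surjection) exists_OS_lift:
  assumes "l \<in> OSX" "finite \<Phi>" "\<Phi> \<subseteq> CX"
    and "\<And>t. t \<in> weights \<Phi> \<Longrightarrow> l (\<lambda>y. - fmax (\<lambda>x. - lincomb \<Phi> t x) y) \<le> (\<Sum>i\<in>\<Phi>. t i * a i)"
    and lower: "\<And>j t. j \<in> \<Phi> \<Longrightarrow> t \<in> weights \<Phi> \<Longrightarrow>
          b j \<le> l (fmax (\<lambda>x. j x - lincomb \<Phi> t x)) + (\<Sum>i\<in>\<Phi>. t i * a i)"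
  shows "\<exists>\<nu>'\<in>OSX. OS_map f \<nu>' = l \<and> (\<forall>j\<in>\<Phi>. b j \<le> \<nu>' j \<and> \<nu>' j \<le> a j)"
proof -
  interpret OS_lift f l \<Phi> a
    by (intro OS_lift.intro OS_lift_axioms.intro open_surjection_axioms) (use assms in auto)
  have "b j \<le> lift j" if "j \<in> \<Phi>" for j
    using lower[OF that] by (intro lift_ge) (simp add: lift_term_def)
  then show ?thesis using lift_OSX lift_OS_map lift_upper Phi_CX
    by (intro bexI[of _ "restrict lift CX"]) (auto simp: subset_iff)
qed

(* Weights are normalised to the cube [0,1]^Phi; the
   probes r*j - s*lincomb Phi u with (r, s, u) in [0,1] x [0,1] x cube Phi cover, after
   rescaling, all functions j - lincomb Phi t that occur in lower compatibility. *)

definition cube :: "('a \<Rightarrow> real) set \<Rightarrow> (('a \<Rightarrow> real) \<Rightarrow> real) set" where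
  "cube \<Phi> = {u. \<forall>i. u i \<in> (if i \<in> \<Phi> then {0..1} else {0})}"

definition params :: "('a \<Rightarrow> real) set \<Rightarrow> (real \<times> real \<times> (('a \<Rightarrow> real) \<Rightarrow> real)) set" where
  "params \<Phi> = {0..1} \<times> {0..1} \<times> cube \<Phi>"

definition probe :: "('a \<Rightarrow> real) \<Rightarrow> ('a \<Rightarrow> real) set \<Rightarrow> real \<times> real \<times> (('a \<Rightarrow> real) \<Rightarrow> real) \<Rightarrow> 'a \<Rightarrow> real"
  where "probe j \<Phi> p = (\<lambda>x. fst p * j x - fst (snd p) * lincomb \<Phi> (snd (snd p)) x)"

lemma compact_params: "compact (params \<Phi>)"
proof -
  let ?S = "\<lambda>i. if i \<in> \<Phi> then {0..1::real} else {0}"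
  have "cube \<Phi> = PiE UNIV ?S" unfolding cube_def PiE_UNIV_domain by (simp add: Pi_def)
  moreover have "compactin (product_topology (\<lambda>i. euclidean) UNIV) (PiE UNIV ?S)"
    unfolding compactin_PiE by auto
  ultimately have "compact (cube \<Phi>)" by (simp add: euclidean_product_topology)
  then show ?thesis unfolding params_def by (intro compact_Times compact_Icc)
qed

lemma cube_range:
  assumes "u \<in> cube \<Phi>" "i \<in> \<Phi>"
  shows "0 \<le> u i \<and> u i \<le> 1"
proof -
  have "u i \<in> (if i \<in> \<Phi> then {0..1} else {0})" using assms(1) unfolding cube_def by blast
  then show ?thesis using assms(2) by simp
qed

lemma normalize_weights:
  assumes Phi: "finite \<Phi>" and t: "t \<in> weights \<Phi>"
  obtains u where "u \<in> cube \<Phi>" "\<forall>i\<in>\<Phi>. t i = (\<Sum>i\<in>\<Phi>. t i) * u i"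
proof -
  define s where "s = (\<Sum>i\<in>\<Phi>. t i)"
  have tn: "\<And>i. i \<in> \<Phi> \<Longrightarrow> 0 \<le> t i" using t unfolding weights_def by auto
  show ?thesis
  proof (cases "s = 0")
    case True
    then have "\<forall>i\<in>\<Phi>. t i = 0" using sum_nonneg_eq_0_iff[OF Phi] tn unfolding s_def by blast
    moreover have "(\<lambda>_. 0) \<in> cube \<Phi>" unfolding cube_def by simp
    ultimately show ?thesis using that by simp
  next
    case False
    with tn have sp: "s > 0" unfolding s_def by (simp add: order_less_le sum_nonneg)
    define u where "u = (\<lambda>i. if i \<in> \<Phi> then t i / s else 0)"
    have "t i \<le> s" if "i \<in> \<Phi>" for i unfolding s_def by (rule member_le_sum) (use that tn Phi in auto)
    then have "u \<in> cube \<Phi>" unfolding cube_def u_def using tn sp by auto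
    moreover have "\<forall>i\<in>\<Phi>. t i = s * u i" unfolding u_def using sp by auto
    ultimately show ?thesis using that unfolding s_def by blast
  qed
qed

lemma sum_rescale: "\<forall>i\<in>\<Phi>. t i = s * u i \<Longrightarrow> (\<Sum>i\<in>\<Phi>. t i * g i) = s * (\<Sum>i\<in>\<Phi>. u i * (g i :: real))"
  unfolding sum_distrib_left by (rule sum.cong) (auto simp: mult.assoc)

lemma lincomb_rescale: "\<forall>i\<in>\<Phi>. t i = s * u i \<Longrightarrow> lincomb \<Phi> t x = s * lincomb \<Phi> u x"
  unfolding lincomb_def by (rule sum_rescale)

lemma lincomb_diff_bound:
  assumes "\<And>i x. i \<in> \<Phi> \<Longrightarrow> \<bar>i x\<bar> \<le> B" "\<And>i. i \<in> \<Phi> \<Longrightarrow> \<bar>u i - u' i\<bar> \<le> d"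
  shows "\<bar>lincomb \<Phi> u x - lincomb \<Phi> u' x\<bar> \<le> real (card \<Phi>) * (d * B)"
proof -
  have "\<bar>lincomb \<Phi> u x - lincomb \<Phi> u' x\<bar> = \<bar>\<Sum>i\<in>\<Phi>. (u i - u' i) * i x\<bar>"
    unfolding lincomb_def by (simp add: sum_subtractf left_diff_distrib)
  also have "\<dots> \<le> (\<Sum>i\<in>\<Phi>. \<bar>u i - u' i\<bar> * \<bar>i x\<bar>)" unfolding abs_mult[symmetric] by (rule sum_abs)
  also have "\<dots> \<le> (\<Sum>i\<in>\<Phi>. d * B)"
  proof (rule sum_mono)
    fix i assume "i \<in> \<Phi>"
    then show "\<bar>u i - u' i\<bar> * \<bar>i x\<bar> \<le> d * B"
      using assms by (intro mult_mono) (auto intro: order_trans[OF abs_ge_zero])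
  qed
  finally show ?thesis by simp
qed

lemma probe_diff_estimate:
  fixes r s r' s' v g g' :: real
  shows "\<bar>(r * v - s * g) - (r' * v - s' * g')\<bar> \<le> \<bar>r - r'\<bar> * \<bar>v\<bar> + \<bar>s - s'\<bar> * \<bar>g\<bar> + \<bar>s'\<bar> * \<bar>g - g'\<bar>"
proof -
  have "(r * v - s * g) - (r' * v - s' * g') = (r - r') * v - (s - s') * g - s' * (g - g')"
    by (simp add: algebra_simps)
  moreover have "\<bar>(r - r') * v - (s - s') * g - s' * (g - g')\<bar>
      \<le> \<bar>(r - r') * v\<bar> + \<bar>(s - s') * g\<bar> + \<bar>s' * (g - g')\<bar>"
    by (smt (verit) abs_triangle_ineq4)
  ultimately show ?thesis unfolding abs_mult by simp
qed

lemma probe_equicontinuous: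
  assumes Phi: "finite \<Phi>" and B: "B > 0" "\<And>i x. i \<in> \<Phi> \<Longrightarrow> \<bar>i x\<bar> \<le> B" "\<And>x. \<bar>j x\<bar> \<le> B"
    and p: "p \<in> params \<Phi>" and e: "e > 0"
  shows "\<exists>W. open W \<and> p \<in> W \<and> (\<forall>p'\<in>W \<inter> params \<Phi>. \<forall>x. \<bar>probe j \<Phi> p x - probe j \<Phi> p' x\<bar> \<le> e
            \<and> \<bar>lincomb \<Phi> (snd (snd p)) x - lincomb \<Phi> (snd (snd p')) x\<bar> \<le> e)"
proof -
  obtain r s u where pe: "p = (r, s, u)" by (cases p) auto
  define n where "n = real (card \<Phi>)"
  define d where "d = e / (B * (1 + 2 * n))"
  have n0: "n \<ge> 0" and d0: "d > 0" unfolding d_def n_def using e B by auto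
  have dB: "d * B * (1 + 2 * n) = e" unfolding d_def using B n0 by simp
  define W where "W = ball r d \<times> ball s d \<times> {u'. \<forall>i\<in>\<Phi>. u' i \<in> ball (u i) d}"
  have "open W"
    unfolding W_def using product_topology_basis'[OF Phi, of "\<lambda>i. ball (u i) d" "\<lambda>i. i"]
    by (intro open_Times open_ball) simp
  moreover have "p \<in> W" unfolding W_def pe using d0 by simp
  moreover have "\<bar>probe j \<Phi> p x - probe j \<Phi> p' x\<bar> \<le> e \<and>
       \<bar>lincomb \<Phi> (snd (snd p)) x - lincomb \<Phi> (snd (snd p')) x\<bar> \<le> e"
    if p': "p' \<in> W \<inter> params \<Phi>" for p' x
  proof -
    obtain r' s' u' where pe': "p' = (r', s', u')" by (cases p') auto
    have close: "\<bar>r - r'\<bar> \<le> d" "\<bar>s - s'\<bar> \<le> d" "\<And>i. i \<in> \<Phi> \<Longrightarrow> \<bar>u i - u' i\<bar> \<le> d"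
      using p' unfolding pe' W_def by (auto simp: dist_real_def)
    have s'1: "\<bar>s'\<bar> \<le> 1" using p' unfolding pe' params_def by auto
    have gg: "\<bar>lincomb \<Phi> u x - lincomb \<Phi> u' x\<bar> \<le> n * (d * B)"
      unfolding n_def using B(2) close(3) by (rule lincomb_diff_bound)
    have "\<bar>lincomb \<Phi> u x\<bar> \<le> n * (1 * B)"
      using lincomb_diff_bound[of \<Phi> B u "\<lambda>_. 0" 1 x] B(2) cube_range p
      unfolding n_def pe params_def by (force simp: lincomb_def)
    then have "\<bar>s - s'\<bar> * \<bar>lincomb \<Phi> u x\<bar> \<le> d * (n * B)"
      using close(2) d0 by (intro mult_mono) auto
    moreover have "\<bar>r - r'\<bar> * \<bar>j x\<bar> \<le> d * B" using close(1) B(3) d0 by (intro mult_mono) auto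
    moreover have "\<bar>s'\<bar> * \<bar>lincomb \<Phi> u x - lincomb \<Phi> u' x\<bar> \<le> 1 * (n * (d * B))"
      using s'1 gg by (intro mult_mono) auto
    moreover have "0 \<le> n * (d * B)" "e = d * B + 2 * (n * (d * B))"
      using n0 d0 B dB by (auto simp: algebra_simps)
    ultimately have "\<bar>probe j \<Phi> p x - probe j \<Phi> p' x\<bar> \<le> e"
      using probe_diff_estimate[of r "j x" s "lincomb \<Phi> u x" r' s' "lincomb \<Phi> u' x"]
        mult.left_commute[of d n B] mult_1_left[of "n * (d * B)"]
      by (simp only: probe_def pe pe' fst_conv snd_conv)
    moreover have "\<bar>lincomb \<Phi> (snd (snd p)) x - lincomb \<Phi> (snd (snd p')) x\<bar> \<le> e"
      using gg \<open>0 \<le> n * (d * B)\<close> \<open>e = d * B + 2 * (n * (d * B))\<close> d0 B(1)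
      unfolding pe pe' snd_conv by (smt (verit) mult_pos_pos)
    ultimately show ?thesis by blast
  qed
  ultimately show ?thesis by blast
qed

(* The upper probes -fmax(-lincomb u) and the lower probes
   fmax(r*j - s*lincomb u) are continuous families on the compact parameter space; closeness
   of l to mu = OS(f)(nu) on all of them yields upper and lower compatibility. *)

context open_surjection
begin

definition upper_probe :: "('a \<Rightarrow> real) set \<Rightarrow> real \<times> real \<times> (('a \<Rightarrow> real) \<Rightarrow> real) \<Rightarrow> 'b \<Rightarrow> real"
  where "upper_probe \<Phi> k = (\<lambda>y. - fmax (\<lambda>x. - lincomb \<Phi> (snd (snd k)) x) y)"

definition lower_probe ::
    "('a \<Rightarrow> real) \<Rightarrow> ('a \<Rightarrow> real) set \<Rightarrow> real \<times> real \<times> (('a \<Rightarrow> real) \<Rightarrow> real) \<Rightarrow> 'b \<Rightarrow> real"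
  where "lower_probe j \<Phi> k = fmax (probe j \<Phi> k)"

(* The two probe families are equicontinuous in the parameter, uniformly on Y;
   this is where the Lipschitz property of fmax enters. *)
lemma upper_probe_equicontinuous:
  assumes Phi: "finite \<Phi>" "\<Phi> \<subseteq> CX" and B: "B > 0" "\<And>i x. i \<in> \<Phi> \<Longrightarrow> \<bar>i x\<bar> \<le> B"
    and k: "k \<in> params \<Phi>" and e: "e > 0"
  shows "\<exists>W. open W \<and> k \<in> W \<and>
           (\<forall>k'\<in>W \<inter> params \<Phi>. \<forall>y. \<bar>upper_probe \<Phi> k y - upper_probe \<Phi> k' y\<bar> \<le> e)"
proof -
  have gC: "(\<lambda>x. - lincomb \<Phi> v x) \<in> CX" for v using Phi by (intro CX_minus lincomb_CX)
  obtain W where W: "open W" "k \<in> W" and close: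
      "\<forall>k'\<in>W \<inter> params \<Phi>. \<forall>x. \<bar>probe (\<lambda>_. 0) \<Phi> k x - probe (\<lambda>_. 0) \<Phi> k' x\<bar> \<le> e
          \<and> \<bar>lincomb \<Phi> (snd (snd k)) x - lincomb \<Phi> (snd (snd k')) x\<bar> \<le> e"
    using probe_equicontinuous[of \<Phi> B "\<lambda>_. 0" k e] Phi B k e by auto
  have "\<bar>- fmax (\<lambda>x. - lincomb \<Phi> (snd (snd k)) x) y - - fmax (\<lambda>x. - lincomb \<Phi> (snd (snd k')) x) y\<bar> \<le> e"
    if k': "k' \<in> W \<inter> params \<Phi>" for k' y
  proof -
    have "\<bar>fmax (\<lambda>x. - lincomb \<Phi> (snd (snd k)) x) y - fmax (\<lambda>x. - lincomb \<Phi> (snd (snd k')) x) y\<bar> \<le> e"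
    proof (rule fmax_lip[OF gC gC])
      fix x
      have "\<bar>lincomb \<Phi> (snd (snd k)) x - lincomb \<Phi> (snd (snd k')) x\<bar> \<le> e" using close k' by blast
      then show "\<bar>- lincomb \<Phi> (snd (snd k)) x - - lincomb \<Phi> (snd (snd k')) x\<bar> \<le> e" by arith
    qed
    then show ?thesis by arith
  qed
  then show ?thesis using W unfolding upper_probe_def by blast
qed

lemma lower_probe_equicontinuous:
  assumes Phi: "finite \<Phi>" "\<Phi> \<subseteq> CX" and B: "B > 0" "\<And>i x. i \<in> \<Phi> \<Longrightarrow> \<bar>i x\<bar> \<le> B"
    and j: "j \<in> \<Phi>" and k: "k \<in> params \<Phi>" and e: "e > 0"
  shows "\<exists>W. open W \<and> k \<in> W \<and>
           (\<forall>k'\<in>W \<inter> params \<Phi>. \<forall>y. \<bar>lower_probe j \<Phi> k y - lower_probe j \<Phi> k' y\<bar> \<le> e)"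
proof -
  have GC: "probe j \<Phi> p \<in> CX" for p
    unfolding probe_def using Phi j by (intro CX_diff CX_cmult lincomb_CX) auto
  obtain W where W: "open W" "k \<in> W" and close:
      "\<forall>k'\<in>W \<inter> params \<Phi>. \<forall>x. \<bar>probe j \<Phi> k x - probe j \<Phi> k' x\<bar> \<le> e
          \<and> \<bar>lincomb \<Phi> (snd (snd k)) x - lincomb \<Phi> (snd (snd k')) x\<bar> \<le> e"
    using probe_equicontinuous[of \<Phi> B j k e] Phi B j k e by auto
  have "\<bar>fmax (probe j \<Phi> k) y - fmax (probe j \<Phi> k') y\<bar> \<le> e" if "k' \<in> W \<inter> params \<Phi>" for k' y
    using close that by (intro fmax_lip[OF GC GC]) auto
  then show ?thesis using W unfolding lower_probe_def by blast
qed

lemma probes_close_nbhd: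
  assumes mu: "\<mu> \<in> OSX" and Phi: "finite \<Phi>" and PhiC: "\<Phi> \<subseteq> CX" and eta: "\<eta> > 0"
  shows "\<exists>V. openin OS_top V \<and> \<mu> \<in> V \<and> (\<forall>l\<in>V. l \<in> OSX \<and>
            (\<forall>k\<in>params \<Phi>. l (upper_probe \<Phi> k) < \<mu> (upper_probe \<Phi> k) + \<eta>) \<and>
            (\<forall>j\<in>\<Phi>. \<forall>k\<in>params \<Phi>. \<mu> (lower_probe j \<Phi> k) - \<eta> < l (lower_probe j \<Phi> k)))"
proof -
  obtain B where B: "B > 0" "\<And>i x. i \<in> \<Phi> \<Longrightarrow> \<bar>i x\<bar> \<le> B"
    using CX_uniform_bound[OF compact_dom Phi PhiC] by blast
  have upperC: "upper_probe \<Phi> k \<in> CX" for k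
    unfolding upper_probe_def using Phi PhiC by (intro CX_minus fmax_CX lincomb_CX)
  have lowerC: "lower_probe j \<Phi> k \<in> CX" if "j \<in> \<Phi>" for j k
    unfolding lower_probe_def probe_def using that Phi PhiC
    by (intro fmax_CX CX_diff CX_cmult lincomb_CX) auto
  have upper_equicont: "\<exists>W. open W \<and> k \<in> W \<and>
      (\<forall>k'\<in>W \<inter> params \<Phi>. \<forall>y. \<bar>upper_probe \<Phi> k y - upper_probe \<Phi> k' y\<bar> \<le> e)"
    if "k \<in> params \<Phi>" "e > 0" for k e
    by (rule upper_probe_equicontinuous[OF Phi PhiC B(1) _ that]) (rule B(2))
  have "\<exists>V. openin OS_top V \<and> \<mu> \<in> V \<and>
      (\<forall>l\<in>V. \<forall>k\<in>params \<Phi>. \<bar>l (upper_probe \<Phi> k) - \<mu> (upper_probe \<Phi> k)\<bar> < \<eta>)"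
    by (rule uniformly_close_nbhd[OF compact_params upperC upper_equicont mu eta])
  then obtain VA where VA: "openin OS_top VA" "\<mu> \<in> VA"
      "\<forall>l\<in>VA. \<forall>k\<in>params \<Phi>. \<bar>l (upper_probe \<Phi> k) - \<mu> (upper_probe \<Phi> k)\<bar> < \<eta>"
    by blast
  have "\<exists>V. openin OS_top V \<and> \<mu> \<in> V \<and>
      (\<forall>l\<in>V. \<forall>k\<in>params \<Phi>. \<bar>l (lower_probe j \<Phi> k) - \<mu> (lower_probe j \<Phi> k)\<bar> < \<eta>)"
    if j: "j \<in> \<Phi>" for j
  proof (rule uniformly_close_nbhd[OF compact_params lowerC[OF j] _ mu eta])
    fix k and e :: real assume k: "k \<in> params \<Phi>" and e: "e > 0"
    show "\<exists>W. open W \<and> k \<in> W \<and>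
        (\<forall>k'\<in>W \<inter> params \<Phi>. \<forall>y. \<bar>lower_probe j \<Phi> k y - lower_probe j \<Phi> k' y\<bar> \<le> e)"
      by (rule lower_probe_equicontinuous[OF Phi PhiC B(1) _ j k e]) (rule B(2))
  qed
  then obtain VB where VB: "\<And>j. j \<in> \<Phi> \<Longrightarrow> openin OS_top (VB j) \<and> \<mu> \<in> VB j \<and>
      (\<forall>l\<in>VB j. \<forall>k\<in>params \<Phi>. \<bar>l (lower_probe j \<Phi> k) - \<mu> (lower_probe j \<Phi> k)\<bar> < \<eta>)"
    by metis
  define V where "V = \<Inter>(insert VA (VB ` \<Phi>))"
  have "openin OS_top V" unfolding V_def using Phi VA(1) VB by (intro openin_Inter) auto
  moreover have "\<mu> \<in> V" unfolding V_def using VA(2) VB by auto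
  moreover have "\<forall>l\<in>V. l \<in> OSX \<and>
      (\<forall>k\<in>params \<Phi>. l (upper_probe \<Phi> k) < \<mu> (upper_probe \<Phi> k) + \<eta>) \<and>
      (\<forall>j\<in>\<Phi>. \<forall>k\<in>params \<Phi>. \<mu> (lower_probe j \<Phi> k) - \<eta> < l (lower_probe j \<Phi> k))"
  proof (intro ballI conjI)
    fix l assume l: "l \<in> V"
    then have lA: "l \<in> VA" unfolding V_def by blast
    then show "l \<in> OSX" using openin_subset[OF VA(1)] unfolding OS_top_def by auto
    fix k assume k: "k \<in> params \<Phi>"
    have "\<bar>l (upper_probe \<Phi> k) - \<mu> (upper_probe \<Phi> k)\<bar> < \<eta>" using VA(3) lA k by blast
    then show "l (upper_probe \<Phi> k) < \<mu> (upper_probe \<Phi> k) + \<eta>" by (simp add: abs_less_iff)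
  next
    fix l j k assume l: "l \<in> V" and j: "j \<in> \<Phi>" and k: "k \<in> params \<Phi>"
    have "l \<in> VB j" using l j unfolding V_def by blast
    then have "\<bar>l (lower_probe j \<Phi> k) - \<mu> (lower_probe j \<Phi> k)\<bar> < \<eta>" using VB[OF j] k by blast
    then show "\<mu> (lower_probe j \<Phi> k) - \<eta> < l (lower_probe j \<Phi> k)" by (simp add: abs_less_iff)
  qed
  ultimately show ?thesis by blast
qed

(* nu itself witnesses that mu = OS(f)(nu) is compatible with its own values on Phi:
   the upper and lower compatibility inequalities hold for l = mu with a = b = nu. *)
lemma own_upper_compatible:
  assumes nu: "\<nu> \<in> OSX" and Phi: "finite \<Phi>" and PhiC: "\<Phi> \<subseteq> CX" and t: "t \<in> weights \<Phi>"
  shows "OS_map f \<nu> (\<lambda>y. - fmax (\<lambda>x. - lincomb \<Phi> t x) y) \<le> (\<Sum>i\<in>\<Phi>. t i * \<nu> i)"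
proof -
  have gC: "lincomb \<Phi> t \<in> CX" using Phi PhiC by (rule lincomb_CX)
  define h where "h = (\<lambda>y. - fmax (\<lambda>x. - lincomb \<Phi> t x) y)"
  have hC: "h \<in> CX" unfolding h_def by (intro CX_minus fmax_CX gC)
  have "OS_map f \<nu> h = \<nu> (\<lambda>x. h (f x))" by (rule OS_map_apply[OF hC])
  also have "\<dots> \<le> \<nu> (lincomb \<Phi> t)"
    using fmax_ge[OF CX_minus[OF gC]]
    by (intro os_mono[OF nu CX_comp[OF hC contf] gC]) (simp add: h_def minus_le_iff)
  also have "\<dots> \<le> (\<Sum>i\<in>\<Phi>. t i * \<nu> i)"
    using os_sum[OF nu Phi, of "\<lambda>i. i" t] PhiC t by (auto simp: lincomb_def[abs_def] weights_def)
  finally show ?thesis unfolding h_def .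
qed

lemma own_lower_compatible:
  assumes nu: "\<nu> \<in> OSX" and Phi: "finite \<Phi>" and PhiC: "\<Phi> \<subseteq> CX"
    and j: "j \<in> \<Phi>" and t: "t \<in> weights \<Phi>"
  shows "\<nu> j \<le> OS_map f \<nu> (fmax (\<lambda>x. j x - lincomb \<Phi> t x)) + (\<Sum>i\<in>\<Phi>. t i * \<nu> i)"
proof -
  have gC: "lincomb \<Phi> t \<in> CX" using Phi PhiC by (rule lincomb_CX)
  define d where "d = (\<lambda>x. j x - lincomb \<Phi> t x)"
  have dC: "d \<in> CX" unfolding d_def using j PhiC gC by (intro CX_diff) auto
  have "\<nu> j \<le> \<nu> d + \<nu> (lincomb \<Phi> t)"
    using os_sub[OF nu dC gC] unfolding d_def by simp
  moreover have "\<nu> d \<le> \<nu> (\<lambda>x. fmax d (f x))"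
    using fmax_ge[OF dC] by (intro os_mono[OF nu dC CX_comp[OF fmax_CX[OF dC] contf]])
  moreover have "OS_map f \<nu> (fmax d) = \<nu> (\<lambda>x. fmax d (f x))" by (rule OS_map_apply[OF fmax_CX[OF dC]])
  moreover have "\<nu> (lincomb \<Phi> t) \<le> (\<Sum>i\<in>\<Phi>. t i * \<nu> i)"
    using os_sum[OF nu Phi, of "\<lambda>i. i" t] PhiC t by (auto simp: lincomb_def[abs_def] weights_def)
  ultimately show ?thesis unfolding d_def by linarith
qed

(* Closeness of l to mu on the upper probes gives upper compatibility with a = nu + eta:
   write t = s u with u in the cube and use homogeneity of fmax and of l. *)
lemma upper_compatible_near:
  assumes nu: "\<nu> \<in> OSX" and Phi: "finite \<Phi>" and PhiC: "\<Phi> \<subseteq> CX" and lam: "l \<in> OSX"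
    and near: "\<And>k. k \<in> params \<Phi> \<Longrightarrow> l (upper_probe \<Phi> k) < OS_map f \<nu> (upper_probe \<Phi> k) + \<eta>"
    and t: "t \<in> weights \<Phi>"
  shows "l (\<lambda>y. - fmax (\<lambda>x. - lincomb \<Phi> t x) y) \<le> (\<Sum>i\<in>\<Phi>. t i * (\<nu> i + \<eta>))"
proof -
  define s where "s = (\<Sum>i\<in>\<Phi>. t i)"
  have s0: "s \<ge> 0" unfolding s_def using t unfolding weights_def by (simp add: sum_nonneg)
  obtain u where u: "u \<in> cube \<Phi>" "\<forall>i\<in>\<Phi>. t i = s * u i"
    using normalize_weights[OF Phi t] unfolding s_def by blast
  have u_weight: "u \<in> weights \<Phi>" using cube_range[OF u(1)] by (simp add: weights_def)
  have gC: "lincomb \<Phi> v \<in> CX" for v using Phi PhiC by (rule lincomb_CX)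
  define h where "h = upper_probe \<Phi> (0, 0, u)"
  have hC: "h \<in> CX" unfolding h_def upper_probe_def by (intro CX_minus fmax_CX gC)
  have rescale: "(\<lambda>y. - fmax (\<lambda>x. - lincomb \<Phi> t x) y) = (\<lambda>y. s * h y)"
    using fmax_hom[OF CX_minus[OF gC] s0] lincomb_rescale[OF u(2)]
    unfolding h_def upper_probe_def by simp
  have "l h < OS_map f \<nu> h + \<eta>" using near u(1) unfolding h_def params_def by simp
  moreover have "OS_map f \<nu> h \<le> (\<Sum>i\<in>\<Phi>. u i * \<nu> i)"
    unfolding h_def upper_probe_def using own_upper_compatible[OF nu Phi PhiC u_weight] by simp
  ultimately have "l (\<lambda>y. - fmax (\<lambda>x. - lincomb \<Phi> t x) y) \<le> s * ((\<Sum>i\<in>\<Phi>. u i * \<nu> i) + \<eta>)"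
    unfolding rescale os_hom[OF lam hC s0] using s0 by (intro mult_left_mono) auto
  also have "\<dots> = (\<Sum>i\<in>\<Phi>. t i * \<nu> i) + s * \<eta>"
    using sum_rescale[OF u(2), of \<nu>] by (simp add: distrib_left)
  also have "\<dots> = (\<Sum>i\<in>\<Phi>. t i * (\<nu> i + \<eta>))"
    unfolding sum_weighted_shift s_def by simp
  finally show ?thesis .
qed

(* Closeness on the lower probes gives lower compatibility with b = nu - eta: with
   t = s u, the residual j - lincomb t is the probe (1, s, u) if s <= 1 and s times the
   probe (1/s, 1, u) otherwise. *)
lemma lower_compatible_near:
  assumes nu: "\<nu> \<in> OSX" and Phi: "finite \<Phi>" and PhiC: "\<Phi> \<subseteq> CX" and lam: "l \<in> OSX"
    and j: "j \<in> \<Phi>" and eta: "\<eta> > 0"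
    and near: "\<And>k. k \<in> params \<Phi> \<Longrightarrow> OS_map f \<nu> (lower_probe j \<Phi> k) - \<eta> < l (lower_probe j \<Phi> k)"
    and t: "t \<in> weights \<Phi>"
  shows "\<nu> j - \<eta> \<le> l (fmax (\<lambda>x. j x - lincomb \<Phi> t x)) + (\<Sum>i\<in>\<Phi>. t i * (\<nu> i + \<eta>))"
proof -
  define \<mu> where "\<mu> = OS_map f \<nu>"
  have mu: "\<mu> \<in> OSX" unfolding \<mu>_def by (rule OS_map_OSX[OF contf surjf nu])
  define s where "s = (\<Sum>i\<in>\<Phi>. t i)"
  have s0: "s \<ge> 0" unfolding s_def using t unfolding weights_def by (simp add: sum_nonneg)
  obtain u where u: "u \<in> cube \<Phi>" "\<forall>i\<in>\<Phi>. t i = s * u i"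
    using normalize_weights[OF Phi t] unfolding s_def by blast
  define d where "d = (\<lambda>x. j x - lincomb \<Phi> t x)"
  define H where "H = fmax d"
  have "(\<Sum>i\<in>\<Phi>. t i * (\<nu> i + \<eta>)) = (\<Sum>i\<in>\<Phi>. t i * \<nu> i) + s * \<eta>"
    unfolding sum_weighted_shift s_def by simp
  then have key: "\<nu> j + s * \<eta> \<le> \<mu> H + (\<Sum>i\<in>\<Phi>. t i * (\<nu> i + \<eta>))"
    using own_lower_compatible[OF nu Phi PhiC j t] unfolding \<mu>_def H_def d_def by linarith
  have "\<nu> j - \<eta> \<le> l H + (\<Sum>i\<in>\<Phi>. t i * (\<nu> i + \<eta>))"
  proof (cases "s \<le> 1")
    case True
    have "probe j \<Phi> (1, s, u) = d" unfolding probe_def d_def using lincomb_rescale[OF u(2)] by simp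
    then have "\<mu> H - \<eta> < l H" using near[of "(1, s, u)"] u(1) s0 True
      unfolding \<mu>_def H_def params_def lower_probe_def by simp
    moreover have "0 \<le> s * \<eta>" using s0 eta by simp
    ultimately show ?thesis using key by linarith
  next
    case False
    have GC: "probe j \<Phi> k \<in> CX" for k
      unfolding probe_def using j PhiC Phi by (intro CX_diff CX_cmult lincomb_CX) auto
    define Q where "Q = fmax (probe j \<Phi> (1/s, 1, u))"
    have QC: "Q \<in> CX" unfolding Q_def by (rule fmax_CX[OF GC])
    have "(\<lambda>x. s * probe j \<Phi> (1/s, 1, u) x) = d"
      unfolding probe_def d_def using lincomb_rescale[OF u(2)] False by (simp add: algebra_simps)
    then have "fmax d y = s * Q y" for y unfolding Q_def using fmax_hom[OF GC s0] by metis
    then have HQ: "H = (\<lambda>y. s * Q y)" unfolding H_def by (rule ext)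
    have "\<mu> Q - \<eta> < l Q" using near[of "(1/s, 1, u)"] u(1) False
      unfolding \<mu>_def Q_def params_def lower_probe_def by simp
    then have "s * (\<mu> Q - \<eta>) \<le> s * l Q" using s0 by (intro mult_left_mono) auto
    then have "\<mu> H - s * \<eta> \<le> l H"
      unfolding HQ os_hom[OF lam QC s0] os_hom[OF mu QC s0] by (simp add: right_diff_distrib)
    then show ?thesis using key eta by linarith
  qed
  then show ?thesis unfolding H_def d_def .
qed

lemma OS_lift_nbhd:
  assumes nu: "\<nu> \<in> OSX" and Phi: "finite \<Phi>" and PhiC: "\<Phi> \<subseteq> CX" and eta: "\<eta> > 0"
  shows "\<exists>V. openin OS_top V \<and> OS_map f \<nu> \<in> V \<and>
     (\<forall>l\<in>V. \<exists>\<nu>'\<in>OSX. OS_map f \<nu>' = l \<and> (\<forall>j\<in>\<Phi>. \<bar>\<nu>' j - \<nu> j\<bar> \<le> \<eta>))"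
proof -
  have mu: "OS_map f \<nu> \<in> OSX" by (rule OS_map_OSX[OF contf surjf nu])
  obtain V where V: "openin OS_top V" "OS_map f \<nu> \<in> V" and near: "\<forall>l\<in>V. l \<in> OSX \<and>
      (\<forall>k\<in>params \<Phi>. l (upper_probe \<Phi> k) < OS_map f \<nu> (upper_probe \<Phi> k) + \<eta>) \<and>
      (\<forall>j\<in>\<Phi>. \<forall>k\<in>params \<Phi>. OS_map f \<nu> (lower_probe j \<Phi> k) - \<eta> < l (lower_probe j \<Phi> k))"
    using probes_close_nbhd[OF mu Phi PhiC eta] by blast
  have "\<exists>\<nu>'\<in>OSX. OS_map f \<nu>' = l \<and> (\<forall>j\<in>\<Phi>. \<nu> j - \<eta> \<le> \<nu>' j \<and> \<nu>' j \<le> \<nu> j + \<eta>)"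
    if l: "l \<in> V" for l
  proof (rule exists_OS_lift)
    show lO: "l \<in> OSX" using near l by blast
    show "l (\<lambda>y. - fmax (\<lambda>x. - lincomb \<Phi> t x) y) \<le> (\<Sum>i\<in>\<Phi>. t i * (\<nu> i + \<eta>))"
      if "t \<in> weights \<Phi>" for t
      using near l that by (intro upper_compatible_near[OF nu Phi PhiC lO]) auto
    show "\<nu> j - \<eta> \<le> l (fmax (\<lambda>x. j x - lincomb \<Phi> t x)) + (\<Sum>i\<in>\<Phi>. t i * (\<nu> i + \<eta>))"
      if "j \<in> \<Phi>" "t \<in> weights \<Phi>" for j t
      using near l that by (intro lower_compatible_near[OF nu Phi PhiC lO _ eta]) auto
  qed (use Phi PhiC in auto)
  then show ?thesis using V by (fastforce simp: abs_le_iff)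
qed

end

(* Every image point OS(f)(nu) of an open set U has, by OS_lift_nbhd, a neighbourhood of
   functionals lifting to functionals close to nu on the finite set describing U near nu. *)
theorem proposition2:
  fixes f :: "'a::t2_space \<Rightarrow> 'b::t2_space"
  assumes "compact (UNIV :: 'a set)" and "compact (UNIV :: 'b set)"
    and "continuous_on UNIV f"
    and "\<And>U. open U \<Longrightarrow> open (f ` U)"
    and "surj f"
  shows "open_map (OS_top :: (('a \<Rightarrow> real) \<Rightarrow> real) topology)
                  (OS_top :: (('b \<Rightarrow> real) \<Rightarrow> real) topology) (OS_map f)"
proof -
  interpret open_surjection f using assms(1,3-5) by unfold_locales
  have "openin OS_top (OS_map f ` U)" if U: "openin OS_top U" for U
    unfolding openin_subopen[of OS_top "OS_map f ` U"]
  proof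
    fix \<mu> assume "\<mu> \<in> OS_map f ` U"
    then obtain \<nu> where nuU: "\<nu> \<in> U" and mu: "\<mu> = OS_map f \<nu>" by blast
    have nu: "\<nu> \<in> OSX" using openin_subset[OF U] nuU unfolding OS_top_def by auto
    obtain \<Phi> \<epsilon> where Phi: "finite \<Phi>" "\<Phi> \<subseteq> CX" and eps: "\<epsilon> > 0"
      and in_U: "\<And>\<nu>'. \<nu>' \<in> OSX \<Longrightarrow> (\<forall>j\<in>\<Phi>. \<bar>\<nu>' j - \<nu> j\<bar> < \<epsilon>) \<Longrightarrow> \<nu>' \<in> U"
      using OS_basic_nbhd[OF U nuU] by blast
    obtain V where V: "openin OS_top V" "\<mu> \<in> V"
      and lifts: "\<forall>l\<in>V. \<exists>\<nu>'\<in>OSX. OS_map f \<nu>' = l \<and> (\<forall>j\<in>\<Phi>. \<bar>\<nu>' j - \<nu> j\<bar> \<le> \<epsilon>/2)"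
      using OS_lift_nbhd[OF nu Phi, of "\<epsilon>/2"] eps mu by auto
    have "V \<subseteq> OS_map f ` U"
      using lifts eps in_U by (force intro: image_eqI)
    then show "\<exists>T. openin OS_top T \<and> \<mu> \<in> T \<and> T \<subseteq> OS_map f ` U" using V by blast
  qed
  then show ?thesis unfolding open_map_def by blast
qed

end
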